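(* Let $M$ be a monoid with finitely many left ideals and finitely many right ideals. Then $M$ is residually finite if and only if all Schützenberger groups $\Gamma(H)$, for $H$ ranging over the $\mathcal{H}$-classes of $M$, are residually finite.
   Context: Green's relations: $x\mathcal{R}y$ iff $xM=yM$, $x\mathcal{L}y$ iff $Mx=My$, $\mathcal{H}=\mathcal{R}\cap\mathcal{L}$. For an $\mathcal{H}$-class $H$, $\mathrm{Stab}(H)=\{s\in M:Hs=H\}$, $\sigma=\{(x,y)\in\mathrm{Stab}(H)^2:hx=hy \text{ for all } h\in H\}$, and the Schützenberger group of $H$ is the group $\Gamma(H)=\mathrm{Stab}(H)/\sigma$. A monoid/group is residually finite if distinct elements are separated by homomorphisms to finite monoids/groups. No regularity of $M$ is assumed. *)

theory Defs
  imports "HOL-Algebra.Group"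
begin

definition left_ideals :: "('a, 'b) monoid_scheme \<Rightarrow> 'a set set" where
  "left_ideals M = {I. I \<subseteq> carrier M \<and> (\<forall>m\<in>carrier M. \<forall>x\<in>I. m \<otimes>\<^bsub>M\<^esub> x \<in> I)}"

definition right_ideals :: "('a, 'b) monoid_scheme \<Rightarrow> 'a set set" where
  "right_ideals M = {I. I \<subseteq> carrier M \<and> (\<forall>m\<in>carrier M. \<forall>x\<in>I. x \<otimes>\<^bsub>M\<^esub> m \<in> I)}"

definition rprinc :: "('a, 'b) monoid_scheme \<Rightarrow> 'a \<Rightarrow> 'a set" where
  "rprinc M x = (\<lambda>m. x \<otimes>\<^bsub>M\<^esub> m) ` carrier M"

definition lprinc :: "('a, 'b) monoid_scheme \<Rightarrow> 'a \<Rightarrow> 'a set" where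
  "lprinc M x = (\<lambda>m. m \<otimes>\<^bsub>M\<^esub> x) ` carrier M"

definition greenR :: "('a, 'b) monoid_scheme \<Rightarrow> 'a \<Rightarrow> 'a \<Rightarrow> bool" where
  "greenR M x y \<longleftrightarrow> x \<in> carrier M \<and> y \<in> carrier M \<and> rprinc M x = rprinc M y"

definition greenL :: "('a, 'b) monoid_scheme \<Rightarrow> 'a \<Rightarrow> 'a \<Rightarrow> bool" where
  "greenL M x y \<longleftrightarrow> x \<in> carrier M \<and> y \<in> carrier M \<and> lprinc M x = lprinc M y"

definition greenH :: "('a, 'b) monoid_scheme \<Rightarrow> 'a \<Rightarrow> 'a \<Rightarrow> bool" where
  "greenH M x y \<longleftrightarrow> greenR M x y \<and> greenL M x y"

definition Hclass :: "('a, 'b) monoid_scheme \<Rightarrow> 'a \<Rightarrow> 'a set" where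
  "Hclass M x = {y. greenH M x y}"

definition Stab :: "('a, 'b) monoid_scheme \<Rightarrow> 'a set \<Rightarrow> 'a set" where
  "Stab M H = {s \<in> carrier M. (\<lambda>h. h \<otimes>\<^bsub>M\<^esub> s) ` H = H}"

definition schutz_rel :: "('a, 'b) monoid_scheme \<Rightarrow> 'a set \<Rightarrow> ('a \<times> 'a) set" where
  "schutz_rel M H = {(x, y). x \<in> Stab M H \<and> y \<in> Stab M H \<and>
      (\<forall>h\<in>H. h \<otimes>\<^bsub>M\<^esub> x = h \<otimes>\<^bsub>M\<^esub> y)}"

text \<open>The Schuetzenberger group Stab(H)/sigma, with the induced multiplication
  (sigma is a congruence on Stab(H), so the union below is a single class).\<close>
definition schutz_group :: "('a, 'b) monoid_scheme \<Rightarrow> 'a set \<Rightarrow> 'a set monoid" where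
  "schutz_group M H =
     \<lparr> carrier = Stab M H // schutz_rel M H,
       mult = (\<lambda>X Y. \<Union>x\<in>X. \<Union>y\<in>Y. schutz_rel M H `` {x \<otimes>\<^bsub>M\<^esub> y}),
       one = schutz_rel M H `` {\<one>\<^bsub>M\<^esub>} \<rparr>"

definition mon_hom :: "('a, 'c) monoid_scheme \<Rightarrow> ('b, 'd) monoid_scheme \<Rightarrow> ('a \<Rightarrow> 'b) set" where
  "mon_hom M N = {h. h \<in> hom M N \<and> h \<one>\<^bsub>M\<^esub> = \<one>\<^bsub>N\<^esub>}"

text \<open>Residual finiteness. Every finite monoid (group) is isomorphic to one whose
  carrier is a set of naturals, so finite targets are taken with element type nat.\<close>
definition residually_finite_monoid :: "('a, 'b) monoid_scheme \<Rightarrow> bool" where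
  "residually_finite_monoid M \<longleftrightarrow>
     (\<forall>x\<in>carrier M. \<forall>y\<in>carrier M. x \<noteq> y \<longrightarrow>
        (\<exists>(N :: nat monoid) h. monoid N \<and> finite (carrier N) \<and> h \<in> mon_hom M N \<and> h x \<noteq> h y))"

definition residually_finite_group :: "('a, 'b) monoid_scheme \<Rightarrow> bool" where
  "residually_finite_group G \<longleftrightarrow>
     (\<forall>x\<in>carrier G. \<forall>y\<in>carrier G. x \<noteq> y \<longrightarrow>
        (\<exists>(N :: nat monoid) h. group N \<and> finite (carrier N) \<and> h \<in> hom G N \<and> h x \<noteq> h y))"

end

theory Submission
  imports Defs "HOL-Algebra.Bij"
begin

text \<open>
  Forward direction (valid for every \<open>H \<subseteq> M\<close>): if \<open>[a] \<noteq> [b]\<close> in \<open>\<Gamma>(H)\<close>, some \<open>h \<in> H\<close> has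
  \<open>h a \<noteq> h b\<close>; a finite image \<open>\<phi>\<close> of \<open>M\<close> separates \<open>h a\<close> and \<open>h b\<close>, and right multiplication
  by \<open>Stab(H)\<close> permutes the finite set \<open>\<phi>(H)\<close>, with \<open>a\<close> and \<open>b\<close> acting differently.

  Backward direction: in every left ideal \<open>I\<close>, two distinct elements are separated by a
  finite-index equivalence compatible with left multiplication. By induction on the number of
  left ideals inside \<open>I\<close>, remove an \<open>\<L>\<close>-class \<open>L\<close> generating a maximal principal left ideal, so
  that \<open>I - L\<close> is a left ideal. On \<open>L\<close> we separate by \<open>\<R>\<close>-classes (finitely many right ideals)
  or, for \<open>\<H>\<close>-related elements, by the kernel of a finite quotient of \<open>\<Gamma>(H)\<close>. The relations on
  \<open>I - L\<close> and \<open>L\<close> are glued by refining the latter with the trace that left multiplications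
  leave in \<open>I - L\<close>; finitely many \<open>\<L>\<close>-classes keep the index finite. For \<open>I = M\<close>, \<open>M\<close> acts
  on the finitely many classes, which gives the separating finite image.
\<close>

section \<open>Finite monoids on the naturals\<close>

definition transport :: "('c \<Rightarrow> nat) \<Rightarrow> ('c, 'd) monoid_scheme \<Rightarrow> nat monoid" where
  "transport e G =
     \<lparr>carrier = e ` carrier G,
      mult = (\<lambda>a b. e (inv_into (carrier G) e a \<otimes>\<^bsub>G\<^esub> inv_into (carrier G) e b)),
      one = e \<one>\<^bsub>G\<^esub>\<rparr>"

context
  fixes e :: "'c \<Rightarrow> nat" and G :: "('c, 'd) monoid_scheme"
  assumes inj: "inj_on e (carrier G)"
begin

lemma transport_mult:
  "x \<in> carrier G \<Longrightarrow> y \<in> carrier G \<Longrightarrow> e x \<otimes>\<^bsub>transport e G\<^esub> e y = e (x \<otimes>\<^bsub>G\<^esub> y)"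
  using inj by (simp add: transport_def)

lemma transport_carrier: "carrier (transport e G) = e ` carrier G"
  and transport_one: "\<one>\<^bsub>transport e G\<^esub> = e \<one>\<^bsub>G\<^esub>"
  by (simp_all add: transport_def)

lemma transport_hom: "monoid G \<Longrightarrow> e \<in> hom G (transport e G)"
  by (auto simp: hom_def transport_carrier transport_mult monoid.m_closed)

lemma transport_monoid:
  assumes G: "monoid G"
  shows "monoid (transport e G)"
proof (rule monoidI)
  fix x y z assume "x \<in> carrier (transport e G)" "y \<in> carrier (transport e G)"
    "z \<in> carrier (transport e G)"
  then obtain a b c where "a \<in> carrier G" "b \<in> carrier G" "c \<in> carrier G" "x = e a" "y = e b" "z = e c"
    by (auto simp: transport_carrier)
  then show "x \<otimes>\<^bsub>transport e G\<^esub> y \<in> carrier (transport e G)"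
    "x \<otimes>\<^bsub>transport e G\<^esub> y \<otimes>\<^bsub>transport e G\<^esub> z = x \<otimes>\<^bsub>transport e G\<^esub> (y \<otimes>\<^bsub>transport e G\<^esub> z)"
    using G by (auto simp: transport_carrier transport_mult monoid.m_assoc monoid.m_closed)
next
  show "\<one>\<^bsub>transport e G\<^esub> \<in> carrier (transport e G)"
    using G by (simp add: transport_carrier transport_one monoid.one_closed)
next
  fix x assume "x \<in> carrier (transport e G)"
  then obtain a where "a \<in> carrier G" "x = e a" by (auto simp: transport_carrier)
  then show "\<one>\<^bsub>transport e G\<^esub> \<otimes>\<^bsub>transport e G\<^esub> x = x" "x \<otimes>\<^bsub>transport e G\<^esub> \<one>\<^bsub>transport e G\<^esub> = x"
    using G by (simp_all add: transport_one transport_mult monoid.one_closed)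
qed

lemma transport_group:
  assumes G: "group G"
  shows "group (transport e G)"
proof (rule monoid.group_l_invI)
  show "monoid (transport e G)" using G by (simp add: group.is_monoid transport_monoid)
  fix x assume "x \<in> carrier (transport e G)"
  then obtain a where a: "a \<in> carrier G" "x = e a" by (auto simp: transport_carrier)
  then have "e (inv\<^bsub>G\<^esub> a) \<otimes>\<^bsub>transport e G\<^esub> x = \<one>\<^bsub>transport e G\<^esub>"
    using G by (simp add: transport_mult transport_one group.l_inv)
  then show "\<exists>y\<in>carrier (transport e G). y \<otimes>\<^bsub>transport e G\<^esub> x = \<one>\<^bsub>transport e G\<^esub>"
    using G a by (auto simp: transport_carrier)
qed

end

lemma separation_by_nat_monoid:
  assumes T: "monoid T" "finite (carrier T)"
    and h: "h \<in> hom M T" "h \<one>\<^bsub>M\<^esub> = \<one>\<^bsub>T\<^esub>" "h x \<noteq> h y"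
    and xy: "x \<in> carrier M" "y \<in> carrier M"
  shows "\<exists>(N :: nat monoid) f. monoid N \<and> finite (carrier N) \<and> f \<in> mon_hom M N \<and> f x \<noteq> f y"
proof -
  obtain e :: "_ \<Rightarrow> nat" where e: "inj_on e (carrier T)" using finite_imp_inj_to_nat_seg[OF T(2)] by blast
  have "e \<circ> h \<in> mon_hom M (transport e T)"
    using hom_compose[OF h(1) transport_hom[OF e T(1)]] h(2) e
    by (simp add: mon_hom_def transport_one)
  moreover have "(e \<circ> h) x \<noteq> (e \<circ> h) y"
    using h xy e by (auto simp: hom_def inj_on_def)
  ultimately show ?thesis
    using transport_monoid[OF e T(1)] T(2) by (metis transport_carrier[OF e] finite_imageI)
qed

lemma separation_by_nat_group:
  assumes T: "group T" "finite (carrier T)"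
    and h: "h \<in> hom M T" "h x \<noteq> h y"
    and xy: "x \<in> carrier M" "y \<in> carrier M"
  shows "\<exists>(N :: nat monoid) f. group N \<and> finite (carrier N) \<and> f \<in> hom M N \<and> f x \<noteq> f y"
proof -
  obtain e :: "_ \<Rightarrow> nat" where e: "inj_on e (carrier T)" using finite_imp_inj_to_nat_seg[OF T(2)] by blast
  have "e \<circ> h \<in> hom M (transport e T)"
    using hom_compose[OF h(1) transport_hom[OF e group.is_monoid[OF T(1)]]] .
  moreover have "(e \<circ> h) x \<noteq> (e \<circ> h) y"
    using h xy e by (auto simp: hom_def inj_on_def)
  ultimately show ?thesis
    using transport_group[OF e T(1)] T(2) by (metis transport_carrier[OF e] finite_imageI)
qed

section \<open>Green's relations and Schuetzenberger groups\<close>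

context monoid
begin

lemma rprinc_mem: "y \<in> rprinc G x \<longleftrightarrow> (\<exists>m\<in>carrier G. y = x \<otimes> m)"
  by (auto simp: rprinc_def)

lemma lprinc_mem: "y \<in> lprinc G x \<longleftrightarrow> (\<exists>m\<in>carrier G. y = m \<otimes> x)"
  by (auto simp: lprinc_def)

lemma rprinc_mult_subset: "x \<in> carrier G \<Longrightarrow> a \<in> carrier G \<Longrightarrow> rprinc G (x \<otimes> a) \<subseteq> rprinc G x"
  by (auto simp: rprinc_def m_assoc intro!: imageI)

lemma lprinc_mult_subset: "x \<in> carrier G \<Longrightarrow> a \<in> carrier G \<Longrightarrow> lprinc G (a \<otimes> x) \<subseteq> lprinc G x"
  by (auto simp: lprinc_def m_assoc[symmetric] intro!: imageI)

lemma greenR_iff: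
  assumes "x \<in> carrier G" "y \<in> carrier G"
  shows "greenR G x y \<longleftrightarrow> (\<exists>a\<in>carrier G. y = x \<otimes> a) \<and> (\<exists>b\<in>carrier G. x = y \<otimes> b)"
proof
  assume "greenR G x y"
  then have "rprinc G x = rprinc G y" by (simp add: greenR_def)
  moreover have "x \<in> rprinc G x" "y \<in> rprinc G y"
    using assms by (auto simp: rprinc_mem intro!: bexI[of _ \<one>])
  ultimately show "(\<exists>a\<in>carrier G. y = x \<otimes> a) \<and> (\<exists>b\<in>carrier G. x = y \<otimes> b)"
    by (auto simp: rprinc_mem)
next
  assume "(\<exists>a\<in>carrier G. y = x \<otimes> a) \<and> (\<exists>b\<in>carrier G. x = y \<otimes> b)"
  then obtain a b where ab: "a \<in> carrier G" "b \<in> carrier G" "y = x \<otimes> a" "x = y \<otimes> b" by blast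
  have "rprinc G y \<subseteq> rprinc G x" using rprinc_mult_subset[OF assms(1) ab(1)] by (simp add: ab(3))
  moreover have "rprinc G x \<subseteq> rprinc G y" using rprinc_mult_subset[OF assms(2) ab(2)] by (simp add: ab(4))
  ultimately have "rprinc G x = rprinc G y" by (rule equalityI[rotated])
  then show "greenR G x y" using assms by (simp add: greenR_def)
qed

lemma greenL_iff:
  assumes "x \<in> carrier G" "y \<in> carrier G"
  shows "greenL G x y \<longleftrightarrow> (\<exists>a\<in>carrier G. y = a \<otimes> x) \<and> (\<exists>b\<in>carrier G. x = b \<otimes> y)"
proof
  assume "greenL G x y"
  then have "lprinc G x = lprinc G y" by (simp add: greenL_def)
  moreover have "x \<in> lprinc G x" "y \<in> lprinc G y"
    using assms by (auto simp: lprinc_mem intro!: bexI[of _ \<one>])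
  ultimately show "(\<exists>a\<in>carrier G. y = a \<otimes> x) \<and> (\<exists>b\<in>carrier G. x = b \<otimes> y)"
    by (auto simp: lprinc_mem)
next
  assume "(\<exists>a\<in>carrier G. y = a \<otimes> x) \<and> (\<exists>b\<in>carrier G. x = b \<otimes> y)"
  then obtain a b where ab: "a \<in> carrier G" "b \<in> carrier G" "y = a \<otimes> x" "x = b \<otimes> y" by blast
  have "lprinc G y \<subseteq> lprinc G x" using lprinc_mult_subset[OF assms(1) ab(1)] by (simp add: ab(3))
  moreover have "lprinc G x \<subseteq> lprinc G y" using lprinc_mult_subset[OF assms(2) ab(2)] by (simp add: ab(4))
  ultimately have "lprinc G x = lprinc G y" by (rule equalityI[rotated])
  then show "greenL G x y" using assms by (simp add: greenL_def)
qed

lemma greenR_carrier: "greenR G x y \<Longrightarrow> x \<in> carrier G \<and> y \<in> carrier G"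
  and greenL_carrier: "greenL G x y \<Longrightarrow> x \<in> carrier G \<and> y \<in> carrier G"
  by (simp_all add: greenR_def greenL_def)

lemma greenR_refl: "x \<in> carrier G \<Longrightarrow> greenR G x x"
  and greenR_sym: "greenR G x y \<Longrightarrow> greenR G y x"
  and greenR_trans: "greenR G x y \<Longrightarrow> greenR G y z \<Longrightarrow> greenR G x z"
  by (auto simp: greenR_def)

lemma greenL_refl: "x \<in> carrier G \<Longrightarrow> greenL G x x"
  and greenL_sym: "greenL G x y \<Longrightarrow> greenL G y x"
  and greenL_trans: "greenL G x y \<Longrightarrow> greenL G y z \<Longrightarrow> greenL G x z"
  by (auto simp: greenL_def)

lemma greenR_left_mult:
  assumes "greenR G x y" "m \<in> carrier G"
  shows "greenR G (m \<otimes> x) (m \<otimes> y)"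
proof -
  have c: "x \<in> carrier G" "y \<in> carrier G" using assms greenR_carrier by auto
  then obtain a b where ab: "a \<in> carrier G" "b \<in> carrier G" "y = x \<otimes> a" "x = y \<otimes> b"
    using assms greenR_iff by blast
  have "m \<otimes> y = m \<otimes> x \<otimes> a" using c assms ab(1) by (simp add: ab(3) m_assoc)
  moreover have "m \<otimes> x = m \<otimes> y \<otimes> b" using c assms ab(2) by (simp add: ab(4) m_assoc)
  ultimately show ?thesis using c assms ab(1,2) by (subst greenR_iff) auto
qed

lemma greenL_right_mult:
  assumes "greenL G x y" "m \<in> carrier G"
  shows "greenL G (x \<otimes> m) (y \<otimes> m)"
proof -
  have c: "x \<in> carrier G" "y \<in> carrier G" using assms greenL_carrier by auto
  then obtain a b where ab: "a \<in> carrier G" "b \<in> carrier G" "y = a \<otimes> x" "x = b \<otimes> y"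
    using assms greenL_iff by blast
  have "y \<otimes> m = a \<otimes> (x \<otimes> m)" using c assms ab(1) by (simp add: ab(3) m_assoc)
  moreover have "x \<otimes> m = b \<otimes> (y \<otimes> m)" using c assms ab(2) by (simp add: ab(4) m_assoc)
  ultimately show ?thesis using c assms ab(1,2) by (subst greenL_iff) auto
qed

lemma greenR_right_factor:
  assumes "x \<in> carrier G" "a \<in> carrier G" "b \<in> carrier G" "x \<otimes> a \<otimes> b = x"
  shows "greenR G x (x \<otimes> a)"
  using assms by (subst greenR_iff) (auto intro: bexI[of _ b])

lemma Hclass_iff: "y \<in> Hclass G x \<longleftrightarrow> greenR G x y \<and> greenL G x y"
  by (simp add: Hclass_def greenH_def)

lemma Hclass_carrier: "Hclass G x \<subseteq> carrier G"
  by (auto simp: Hclass_iff greenR_def)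

lemma Hclass_self: "x \<in> carrier G \<Longrightarrow> x \<in> Hclass G x"
  by (simp add: Hclass_iff greenR_refl greenL_refl)

lemma Stab_carrier: "Stab G H \<subseteq> carrier G"
  by (auto simp: Stab_def)

lemma Stab_image: "a \<in> Stab G H \<Longrightarrow> h \<in> H \<Longrightarrow> h \<otimes> a \<in> H"
  by (auto simp: Stab_def)

lemma Stab_one:
  assumes "H \<subseteq> carrier G" shows "\<one> \<in> Stab G H"
proof -
  have "(\<lambda>h. h \<otimes> \<one>) ` H = (\<lambda>h. h) ` H" using assms by (intro image_cong) auto
  then show ?thesis by (simp add: Stab_def)
qed

lemma Stab_mult:
  assumes H: "H \<subseteq> carrier G" and a: "a \<in> Stab G H" and b: "b \<in> Stab G H"
  shows "a \<otimes> b \<in> Stab G H"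
proof -
  have c: "a \<in> carrier G" "b \<in> carrier G" using a b by (auto simp: Stab_def)
  have "(\<lambda>h. h \<otimes> (a \<otimes> b)) ` H = (\<lambda>h. h \<otimes> b) ` ((\<lambda>h. h \<otimes> a) ` H)"
    unfolding image_image using H c by (intro image_cong) (auto simp: m_assoc)
  also have "\<dots> = H" using a b by (simp add: Stab_def)
  finally show ?thesis using c by (simp add: Stab_def)
qed

lemma schutz_rel_equiv: "equiv (Stab G H) (schutz_rel G H)"
  by (rule equivI) (auto simp: schutz_rel_def refl_on_def sym_def trans_def)

text \<open>\<open>\<sigma>\<close> is a congruence on \<open>Stab(H)\<close>, so the multiplication of \<open>\<Gamma>(H)\<close> is computed on
  representatives.\<close>

lemma schutz_rel_mult:
  assumes H: "H \<subseteq> carrier G" and "(a, x) \<in> schutz_rel G H" "(b, y) \<in> schutz_rel G H"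
  shows "(a \<otimes> b, x \<otimes> y) \<in> schutz_rel G H"
proof -
  have S: "a \<in> Stab G H" "b \<in> Stab G H" "x \<in> Stab G H" "y \<in> Stab G H"
    and a_x: "\<And>h. h \<in> H \<Longrightarrow> h \<otimes> a = h \<otimes> x" and b_y: "\<And>h. h \<in> H \<Longrightarrow> h \<otimes> b = h \<otimes> y"
    using assms(2,3) by (auto simp: schutz_rel_def)
  have "h \<otimes> (a \<otimes> b) = h \<otimes> (x \<otimes> y)" if h: "h \<in> H" for h
  proof -
    have c: "h \<in> carrier G" "a \<in> carrier G" "b \<in> carrier G" "x \<in> carrier G" "y \<in> carrier G"
      using h H S Stab_carrier by auto
    have "h \<otimes> (a \<otimes> b) = (h \<otimes> a) \<otimes> b" using c by (simp add: m_assoc)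
    also have "\<dots> = (h \<otimes> a) \<otimes> y" using b_y[OF Stab_image[OF S(1) h]] .
    also have "\<dots> = h \<otimes> (x \<otimes> y)" using a_x[OF h] c by (simp add: m_assoc)
    finally show ?thesis .
  qed
  then show ?thesis using H S Stab_mult by (simp add: schutz_rel_def)
qed

abbreviation sclass :: "'a set \<Rightarrow> 'a \<Rightarrow> 'a set" where
  "sclass H a \<equiv> schutz_rel G H `` {a}"

lemma sclass_carrier: "a \<in> Stab G H \<Longrightarrow> sclass H a \<in> carrier (schutz_group G H)"
  by (auto simp: schutz_group_def quotient_def)

lemma schutz_group_elem:
  "X \<in> carrier (schutz_group G H) \<Longrightarrow> \<exists>a\<in>Stab G H. X = sclass H a"
  by (auto simp: schutz_group_def quotient_def)

lemma sclass_eq_iff: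
  "a \<in> Stab G H \<Longrightarrow> b \<in> Stab G H \<Longrightarrow> sclass H a = sclass H b \<longleftrightarrow> (a, b) \<in> schutz_rel G H"
  using eq_equiv_class_iff[OF schutz_rel_equiv] by blast

lemma sclass_mult:
  assumes H: "H \<subseteq> carrier G" and a: "a \<in> Stab G H" and b: "b \<in> Stab G H"
  shows "sclass H a \<otimes>\<^bsub>schutz_group G H\<^esub> sclass H b = sclass H (a \<otimes> b)"
proof -
  have "sclass H (x \<otimes> y) = sclass H (a \<otimes> b)" if "x \<in> sclass H a" "y \<in> sclass H b" for x y
  proof -
    have "(a \<otimes> b, x \<otimes> y) \<in> schutz_rel G H" using schutz_rel_mult[OF H] that by simp
    from equiv_class_eq[OF schutz_rel_equiv this] show ?thesis by (rule sym)
  qed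
  moreover have "a \<in> sclass H a" "b \<in> sclass H b" using a b by (auto simp: schutz_rel_def)
  ultimately have "(\<Union>x\<in>sclass H a. \<Union>y\<in>sclass H b. sclass H (x \<otimes> y)) = sclass H (a \<otimes> b)"
    by blast
  then show ?thesis by (simp add: schutz_group_def)
qed

lemma right_translate_Lclass:
  assumes c: "h \<in> carrier G" "u \<in> carrier G" "a \<in> carrier G" "b \<in> carrier G"
    and ua: "u = h \<otimes> a" and hb: "h = u \<otimes> b" and k: "greenL G h k"
  shows "k \<otimes> a \<otimes> b = k \<and> greenL G u (k \<otimes> a) \<and> greenR G k (k \<otimes> a)"
proof -
  have kc: "k \<in> carrier G" using k greenL_carrier by auto
  obtain s where s: "s \<in> carrier G" "k = s \<otimes> h" using greenL_iff[OF c(1) kc] k by blast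
  have "k \<otimes> a \<otimes> b = s \<otimes> (h \<otimes> a \<otimes> b)" using s c by (simp add: m_assoc)
  also have "h \<otimes> a \<otimes> b = h" by (simp only: ua[symmetric] hb[symmetric])
  finally have e: "k \<otimes> a \<otimes> b = k" using s by simp
  have "greenL G u (k \<otimes> a)" using greenL_right_mult[OF k c(3)] ua by simp
  then show ?thesis using e greenR_right_factor[OF kc c(3,4) e] by simp
qed

lemma Hclass_transitive:
  assumes hc: "h \<in> carrier G" and u: "u \<in> Hclass G h"
  shows "\<exists>a\<in>Stab G (Hclass G h). u = h \<otimes> a"
proof -
  have R: "greenR G h u" and L: "greenL G h u" using u by (auto simp: Hclass_iff)
  have uc: "u \<in> carrier G" using R greenR_carrier by auto
  obtain a b where ab: "a \<in> carrier G" "b \<in> carrier G" "u = h \<otimes> a" "h = u \<otimes> b"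
    using greenR_iff[OF hc uc] R by blast
  have "k \<otimes> a \<in> Hclass G h" if k: "k \<in> Hclass G h" for k
  proof -
    have kR: "greenR G h k" and kL: "greenL G h k" using k by (auto simp: Hclass_iff)
    then have "greenL G u (k \<otimes> a) \<and> greenR G k (k \<otimes> a)"
      using right_translate_Lclass[OF hc uc ab] by blast
    then show ?thesis using kR L greenR_trans greenL_trans by (auto simp: Hclass_iff)
  qed
  moreover have "k \<in> (\<lambda>k. k \<otimes> a) ` Hclass G h" if k: "k \<in> Hclass G h" for k
  proof -
    have "greenL G u k" using k greenL_trans[OF greenL_sym[OF L]] by (simp add: Hclass_iff)
    then have "k \<otimes> b \<otimes> a = k \<and> greenL G h (k \<otimes> b) \<and> greenR G k (k \<otimes> b)"
      using right_translate_Lclass[OF uc hc ab(2,1,4,3)] by blast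
    then have "k \<otimes> b \<in> Hclass G h \<and> k = k \<otimes> b \<otimes> a"
      using k greenR_trans by (auto simp: Hclass_iff)
    then show ?thesis by blast
  qed
  ultimately have "(\<lambda>k. k \<otimes> a) ` Hclass G h = Hclass G h" by blast
  then show ?thesis using ab(1,3) by (auto simp: Stab_def)
qed

lemma greenL_mult_eq:
  assumes "greenL G u k" "u \<otimes> a = u \<otimes> b" "a \<in> carrier G" "b \<in> carrier G"
  shows "k \<otimes> a = k \<otimes> b"
proof -
  have c: "u \<in> carrier G" "k \<in> carrier G" using assms(1) greenL_carrier by auto
  obtain t where "t \<in> carrier G" "k = t \<otimes> u" using greenL_iff[OF c] assms(1) by blast
  then show ?thesis using assms c by (simp add: m_assoc)
qed

lemma Stab_Lclass_image:
  assumes uv: "greenL G u v" and s: "s \<in> Stab G (Hclass G u)" and k: "k \<in> Hclass G v"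
  shows "k \<otimes> s \<in> Hclass G v"
proof -
  have uc: "u \<in> carrier G" using uv greenL_carrier by auto
  have sc: "s \<in> carrier G" using s Stab_carrier by auto
  have kR: "greenR G v k" and kL: "greenL G v k" using k by (auto simp: Hclass_iff)
  have kc: "k \<in> carrier G" using kR greenR_carrier by auto
  have ku: "greenL G u k" using greenL_trans[OF uv kL] .
  have "u \<otimes> s \<in> Hclass G u" using Stab_image[OF s Hclass_self[OF uc]] .
  then have usR: "greenR G u (u \<otimes> s)" and usL: "greenL G u (u \<otimes> s)" by (auto simp: Hclass_iff)
  obtain c where c: "c \<in> carrier G" "u \<otimes> s \<otimes> c = u"
    using greenR_iff[OF uc m_closed[OF uc sc]] usR by auto
  have "k \<otimes> s \<otimes> c = k \<otimes> \<one>"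
    using greenL_mult_eq[OF ku _ _ one_closed, of "s \<otimes> c"] c uc sc kc by (simp add: m_assoc)
  then have "greenR G k (k \<otimes> s)" using greenR_right_factor[OF kc sc c(1)] kc by simp
  moreover have "greenL G v (k \<otimes> s)"
    using greenL_trans[OF greenL_sym[OF uv] greenL_trans[OF usL greenL_right_mult[OF ku sc]]] .
  ultimately show ?thesis using greenR_trans[OF kR] by (simp add: Hclass_iff)
qed

lemma Stab_Lclass_subset:
  assumes uv: "greenL G u v"
  shows "Stab G (Hclass G u) \<subseteq> Stab G (Hclass G v)"
proof
  fix s assume s: "s \<in> Stab G (Hclass G u)"
  have uc: "u \<in> carrier G" using uv greenL_carrier by auto
  have sc: "s \<in> carrier G" using s Stab_carrier by auto
  have "u \<in> (\<lambda>h. h \<otimes> s) ` Hclass G u" using s Hclass_self[OF uc] by (simp add: Stab_def)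
  then obtain k0 where k0: "k0 \<in> Hclass G u" "u = k0 \<otimes> s" by blast
  obtain t where t: "t \<in> Stab G (Hclass G u)" "k0 = u \<otimes> t" using Hclass_transitive[OF uc k0(1)] by blast
  have tc: "t \<in> carrier G" using t Stab_carrier by auto
  have "k \<in> (\<lambda>k. k \<otimes> s) ` Hclass G v" if k: "k \<in> Hclass G v" for k
  proof -
    have "greenL G u k" using k greenL_trans[OF uv] by (simp add: Hclass_iff)
    moreover have "u \<otimes> (t \<otimes> s) = u \<otimes> \<one>"
      using uc sc tc by (simp add: m_assoc[symmetric] t(2)[symmetric] k0(2)[symmetric])
    ultimately have "k \<otimes> (t \<otimes> s) = k \<otimes> \<one>" using greenL_mult_eq sc tc by (meson m_closed one_closed)
    moreover have "k \<in> carrier G" using k Hclass_carrier by blast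
    ultimately have "k = (k \<otimes> t) \<otimes> s" using sc tc by (simp add: m_assoc)
    then show ?thesis using Stab_Lclass_image[OF uv t(1) k] by (rule image_eqI)
  qed
  then have "(\<lambda>k. k \<otimes> s) ` Hclass G v = Hclass G v" using Stab_Lclass_image[OF uv s] by blast
  then show "s \<in> Stab G (Hclass G v)" using sc by (simp add: Stab_def)
qed

lemma Stab_Lclass_eq: "greenL G u v \<Longrightarrow> Stab G (Hclass G u) = Stab G (Hclass G v)"
  using Stab_Lclass_subset greenL_sym by blast

end

section \<open>Residual finiteness passes to Schuetzenberger groups\<close>

lemma finite_BijGroup:
  assumes "finite S" shows "finite (carrier (BijGroup S))"
proof (rule finite_subset)
  show "carrier (BijGroup S) \<subseteq> S \<rightarrow>\<^sub>E S"
    by (auto simp: BijGroup_def Bij_def bij_betw_def PiE_def)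
  show "finite (S \<rightarrow>\<^sub>E S)" using assms by (simp add: finite_PiE)
qed

definition stab_perm :: "('a \<Rightarrow> 'c) \<Rightarrow> ('c, 'd) monoid_scheme \<Rightarrow> 'a set \<Rightarrow> 'a \<Rightarrow> 'c \<Rightarrow> 'c" where
  "stab_perm \<phi> N H s = (\<lambda>z \<in> \<phi> ` H. z \<otimes>\<^bsub>N\<^esub> \<phi> s)"

locale stab_image = monoid G + N: monoid N
  for G (structure) and N :: "('c, 'd) monoid_scheme" +
  fixes \<phi> :: "'a \<Rightarrow> 'c" and H :: "'a set"
  assumes hom: "\<phi> \<in> hom G N" and finite_target: "finite (carrier N)" and H: "H \<subseteq> carrier G"
begin

abbreviation perm :: "'a \<Rightarrow> 'c \<Rightarrow> 'c" where
  "perm \<equiv> stab_perm \<phi> N H"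

abbreviation B :: "('c \<Rightarrow> 'c) monoid" where
  "B \<equiv> BijGroup (\<phi> ` H)"

lemma \<phi>_mult: "x \<in> carrier G \<Longrightarrow> y \<in> carrier G \<Longrightarrow> \<phi> (x \<otimes> y) = \<phi> x \<otimes>\<^bsub>N\<^esub> \<phi> y"
  using hom by (simp add: hom_def)

lemma finite_image: "finite (\<phi> ` H)"
  using H hom finite_target by (auto simp: hom_def intro: finite_subset)

lemma perm_apply:
  assumes "k \<in> H" "s \<in> Stab G H" shows "perm s (\<phi> k) = \<phi> (k \<otimes> s)"
proof -
  have "k \<in> carrier G" "s \<in> carrier G" using assms H Stab_carrier by auto
  then show ?thesis using assms(1) by (simp add: stab_perm_def \<phi>_mult)
qed

lemma perm_Bij:
  assumes s: "s \<in> Stab G H"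
  shows "perm s \<in> carrier B"
proof -
  have "perm s ` \<phi> ` H = \<phi> ` ((\<lambda>k. k \<otimes> s) ` H)"
    by (auto simp: image_image perm_apply[OF _ s] simp del: stab_perm_def)
  also have "\<dots> = \<phi> ` H" using s by (simp add: Stab_def)
  finally have "perm s ` \<phi> ` H = \<phi> ` H" .
  moreover have "inj_on (perm s) (\<phi> ` H)"
    using finite_surj_inj[OF finite_image] calculation by simp
  ultimately show ?thesis by (simp add: BijGroup_def Bij_def bij_betw_def stab_perm_def)
qed

text \<open>Right multiplication gives a right action, i.e.\ an anti-homomorphism into \<open>B\<close>.\<close>

lemma perm_mult:
  assumes s: "s \<in> Stab G H" and t: "t \<in> Stab G H"
  shows "perm (s \<otimes> t) = perm t \<otimes>\<^bsub>B\<^esub> perm s"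
proof -
  have "perm (s \<otimes> t) = compose (\<phi> ` H) (perm t) (perm s)"
  proof
    fix z show "perm (s \<otimes> t) z = compose (\<phi> ` H) (perm t) (perm s) z"
      using s t H Stab_carrier Stab_image[OF s] Stab_mult[OF H s t]
      by (auto simp: compose_def perm_apply m_assoc subset_iff simp del: stab_perm_def)
         (auto simp: stab_perm_def)
  qed
  then show ?thesis using perm_Bij[OF s] perm_Bij[OF t] by (simp add: BijGroup_def)
qed

lemma perm_schutz_rel:
  assumes "(s, s') \<in> schutz_rel G H" shows "perm s = perm s'"
proof
  fix z show "perm s z = perm s' z"
    using assms by (cases "z \<in> \<phi> ` H") (auto simp: schutz_rel_def perm_apply, simp add: stab_perm_def)
qed

text \<open>Inverting turns the anti-homomorphism \<open>perm\<close> into a homomorphism, which is constant on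
  \<open>\<sigma>\<close>-classes and hence defined on the Schuetzenberger group.\<close>

definition schutz_perm :: "'a set \<Rightarrow> 'c \<Rightarrow> 'c" where
  "schutz_perm X = inv\<^bsub>B\<^esub> (perm (SOME s. s \<in> X))"

lemma schutz_perm_sclass:
  assumes s: "s \<in> Stab G H" shows "schutz_perm (sclass H s) = inv\<^bsub>B\<^esub> (perm s)"
proof -
  have "s \<in> sclass H s" using s by (auto simp: schutz_rel_def)
  then have "(s, SOME s'. s' \<in> sclass H s) \<in> schutz_rel G H" by (rule someI2) simp
  then show ?thesis by (simp add: schutz_perm_def perm_schutz_rel)
qed

lemma schutz_perm_hom: "schutz_perm \<in> hom (schutz_group G H) B"
proof (rule homI)
  fix X assume "X \<in> carrier (schutz_group G H)"
  then obtain s where "s \<in> Stab G H" "X = sclass H s" using schutz_group_elem by blast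
  then show "schutz_perm X \<in> carrier B"
    by (simp add: schutz_perm_sclass perm_Bij group.inv_closed[OF group_BijGroup])
next
  fix X Y assume "X \<in> carrier (schutz_group G H)" "Y \<in> carrier (schutz_group G H)"
  then obtain s t where s: "s \<in> Stab G H" "X = sclass H s" and t: "t \<in> Stab G H" "Y = sclass H t"
    using schutz_group_elem by metis
  have "schutz_perm (X \<otimes>\<^bsub>schutz_group G H\<^esub> Y) = inv\<^bsub>B\<^esub> (perm t \<otimes>\<^bsub>B\<^esub> perm s)"
    using s t by (simp add: sclass_mult[OF H] schutz_perm_sclass Stab_mult[OF H] perm_mult)
  also have "\<dots> = schutz_perm X \<otimes>\<^bsub>B\<^esub> schutz_perm Y"
    using s t by (simp add: group.inv_mult_group[OF group_BijGroup] perm_Bij schutz_perm_sclass)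
  finally show "schutz_perm (X \<otimes>\<^bsub>schutz_group G H\<^esub> Y) = schutz_perm X \<otimes>\<^bsub>B\<^esub> schutz_perm Y" .
qed

end

text \<open>Two
  distinct classes \<open>[a] \<noteq> [b]\<close> differ at some \<open>h \<in> H\<close>; separating \<open>h a\<close> from \<open>h b\<close> by a finite
  image \<open>\<phi>\<close> of \<open>M\<close>, the permutations of \<open>\<phi>(H)\<close> induced by \<open>a\<close> and \<open>b\<close> differ.\<close>

lemma (in monoid) schutz_group_residually_finite:
  assumes rf: "residually_finite_monoid G" and H: "H \<subseteq> carrier G"
  shows "residually_finite_group (schutz_group G H)"
  unfolding residually_finite_group_def
proof (intro ballI impI)
  fix X Y assume X: "X \<in> carrier (schutz_group G H)" and Y: "Y \<in> carrier (schutz_group G H)"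
    and XY: "X \<noteq> Y"
  obtain a b where a: "a \<in> Stab G H" "X = sclass H a" and b: "b \<in> Stab G H" "Y = sclass H b"
    using X Y schutz_group_elem by metis
  then obtain h where h: "h \<in> H" "h \<otimes> a \<noteq> h \<otimes> b"
    using XY sclass_eq_iff by (auto simp: schutz_rel_def)
  have "h \<otimes> a \<in> carrier G" "h \<otimes> b \<in> carrier G" using h a b H Stab_carrier by auto
  then obtain N :: "nat monoid" and \<phi> where N: "monoid N" "finite (carrier N)"
    and \<phi>: "\<phi> \<in> mon_hom G N" and sep: "\<phi> (h \<otimes> a) \<noteq> \<phi> (h \<otimes> b)"
    using rf h unfolding residually_finite_monoid_def by blast
  interpret stab_image G N \<phi> H
    using \<phi> N(2) H by (intro stab_image.intro[OF monoid_axioms N(1)] stab_image_axioms.intro)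
      (simp_all add: mon_hom_def)
  have "schutz_perm X \<noteq> schutz_perm Y"
  proof
    assume "schutz_perm X = schutz_perm Y"
    then have "perm a = perm b"
      using a b perm_Bij group.inv_inv[OF group_BijGroup] by (metis schutz_perm_sclass)
    then show False using sep h a b by (metis perm_apply)
  qed
  then show "\<exists>(N :: nat monoid) f. group N \<and> finite (carrier N) \<and> f \<in> hom (schutz_group G H) N \<and> f X \<noteq> f Y"
    using separation_by_nat_group[OF group_BijGroup finite_BijGroup[OF finite_image]
        schutz_perm_hom _ X Y] by blast
qed

section \<open>Finite-index left congruences\<close>

lemma finite_image_factor:
  assumes fin: "finite (F ` A)" and eq: "\<And>u v. u \<in> A \<Longrightarrow> v \<in> A \<Longrightarrow> F u = F v \<Longrightarrow> G u = G v"
  shows "finite (G ` A)"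
proof -
  define pick where "pick y = (SOME u. u \<in> A \<and> F u = y)" for y
  have "G u \<in> (\<lambda>y. G (pick y)) ` F ` A" if "u \<in> A" for u
  proof -
    have "pick (F u) \<in> A \<and> F (pick (F u)) = F u"
      unfolding pick_def by (rule someI[of _ u]) (use that in simp)
    then have "G u = G (pick (F u))" using eq that by metis
    then show ?thesis using that by blast
  qed
  then have "G ` A \<subseteq> (\<lambda>y. G (pick y)) ` F ` A" by blast
  then show ?thesis using finite_imageI[OF fin] by (rule finite_subset)
qed

lemma finite_quotient_factor:
  assumes eqv: "equiv A r" and fin: "finite (F ` A)"
    and eq: "\<And>u v. u \<in> A \<Longrightarrow> v \<in> A \<Longrightarrow> F u = F v \<Longrightarrow> (u, v) \<in> r"
  shows "finite (A // r)"
proof -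
  have "finite ((\<lambda>x. r `` {x}) ` A)"
  proof (rule finite_image_factor[OF fin])
    fix u v assume "u \<in> A" "v \<in> A" "F u = F v"
    then show "r `` {u} = r `` {v}" using eq equiv_class_eq[OF eqv] by blast
  qed
  moreover have "A // r = (\<lambda>x. r `` {x}) ` A" by (auto simp: quotient_def)
  ultimately show ?thesis by simp
qed

context monoid
begin

text \<open>Compatibility with left multiplication, as far as products stay inside \<open>A\<close>; for a left
  ideal \<open>A\<close> this is ordinary left compatibility.\<close>

definition lcong_on :: "'a set \<Rightarrow> ('a \<times> 'a) set \<Rightarrow> bool" where
  "lcong_on A r \<longleftrightarrow>
     (\<forall>m\<in>carrier G. \<forall>u v. (u, v) \<in> r \<longrightarrow> m \<otimes> u \<in> A \<longrightarrow> m \<otimes> v \<in> A \<longrightarrow> (m \<otimes> u, m \<otimes> v) \<in> r)"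

definition fi_lcong :: "'a set \<Rightarrow> ('a \<times> 'a) set \<Rightarrow> bool" where
  "fi_lcong A r \<longleftrightarrow> equiv A r \<and> lcong_on A r \<and> finite (A // r)"

text \<open>The trivial case, used when the two elements to separate do not both lie in \<open>A\<close>.\<close>

lemma fi_lcong_total: "fi_lcong A (A \<times> A)"
proof -
  have "A // (A \<times> A) \<subseteq> {A}" by (auto simp: quotient_def)
  then have "finite (A // (A \<times> A))" by (rule finite_subset) simp
  then show ?thesis by (auto simp: fi_lcong_def lcong_on_def equiv_def refl_on_def sym_def trans_def)
qed

lemma left_idealD: "I \<in> left_ideals G \<Longrightarrow> m \<in> carrier G \<Longrightarrow> x \<in> I \<Longrightarrow> m \<otimes> x \<in> I"
  and left_ideal_carrier: "I \<in> left_ideals G \<Longrightarrow> I \<subseteq> carrier G"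
  by (auto simp: left_ideals_def)

lemma lcong_on_left_ideal:
  assumes "I \<in> left_ideals G" "lcong_on I r" "r \<subseteq> I \<times> I" "(u, v) \<in> r" "m \<in> carrier G"
  shows "(m \<otimes> u, m \<otimes> v) \<in> r"
  using assms left_idealD by (auto simp: lcong_on_def)

lemma rprinc_right_ideal: "x \<in> carrier G \<Longrightarrow> rprinc G x \<in> right_ideals G"
  by (auto simp: right_ideals_def rprinc_def m_assoc)

lemma lprinc_left_ideal: "x \<in> carrier G \<Longrightarrow> lprinc G x \<in> left_ideals G"
  by (auto simp: left_ideals_def lprinc_def m_assoc[symmetric])

lemma fi_lcong_greenR:
  assumes finR: "finite (right_ideals G)" and A: "A \<subseteq> carrier G"
  shows "fi_lcong A (Restr {(u, v). greenR G u v} A)"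
  unfolding fi_lcong_def
proof (intro conjI)
  show eqv: "equiv A (Restr {(u, v). greenR G u v} A)"
    using A by (intro equivI) (auto simp: refl_on_def sym_def trans_def
        intro: greenR_refl greenR_sym greenR_trans)
  show "lcong_on A (Restr {(u, v). greenR G u v} A)"
    by (auto simp: lcong_on_def intro: greenR_left_mult)
  have "rprinc G ` A \<subseteq> right_ideals G" using rprinc_right_ideal A by blast
  then have "finite (rprinc G ` A)" using finR by (rule finite_subset)
  then show "finite (A // Restr {(u, v). greenR G u v} A)"
    by (rule finite_quotient_factor[OF eqv]) (use A in \<open>auto simp: greenR_def\<close>)
qed

end

section \<open>Separation inside an \<open>\<H>\<close>-class\<close>

locale schutz_kernel = monoid G + N: group N
  for G (structure) and N :: "('c, 'd) monoid_scheme" +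
  fixes w :: 'a and \<phi> :: "'a set \<Rightarrow> 'c"
  assumes w: "w \<in> carrier G" and hom: "\<phi> \<in> hom (schutz_group G (Hclass G w)) N"
begin

abbreviation Lw :: "'a set" where
  "Lw \<equiv> {v. greenL G w v}"

abbreviation Sw :: "'a set" where
  "Sw \<equiv> Stab G (Hclass G w)"

abbreviation cls :: "'a \<Rightarrow> 'a set" where
  "cls a \<equiv> sclass (Hclass G w) a"

lemma Lw_carrier: "v \<in> Lw \<Longrightarrow> v \<in> carrier G"
  using greenL_carrier by blast

lemma Lw_greenL:
  assumes "u \<in> Lw" shows "greenL G u v \<longleftrightarrow> v \<in> Lw"
proof -
  have wu: "greenL G w u" using assms by simp
  show ?thesis using greenL_trans[OF wu] greenL_trans[OF greenL_sym[OF wu]] by auto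
qed

lemma Sw_carrier: "a \<in> Sw \<Longrightarrow> a \<in> carrier G"
  using Stab_carrier by blast

lemma Lw_Stab: "v \<in> Lw \<Longrightarrow> Stab G (Hclass G v) = Sw"
  by (rule sym, rule Stab_Lclass_eq) simp

lemma Lw_translate:
  assumes u: "u \<in> Lw" and v: "v \<in> Lw" and uv: "greenR G u v"
  shows "\<exists>a\<in>Sw. v = u \<otimes> a"
proof -
  have "greenL G u v" using u v Lw_greenL by blast
  then have "v \<in> Hclass G u" using uv by (simp add: Hclass_iff)
  then obtain a where "a \<in> Stab G (Hclass G u)" "v = u \<otimes> a"
    using Hclass_transitive[OF Lw_carrier[OF u]] by blast
  then show ?thesis using Lw_Stab[OF u] by auto
qed

lemma Lw_cls_eq:
  assumes v: "v \<in> Lw" and ab: "a \<in> Sw" "b \<in> Sw" and eq: "v \<otimes> a = v \<otimes> b"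
  shows "cls a = cls b"
proof -
  have "h \<otimes> a = h \<otimes> b" if "h \<in> Hclass G w" for h
  proof -
    have "h \<in> Lw" using that by (simp add: Hclass_iff)
    then have "greenL G v h" using Lw_greenL[OF v] by blast
    then show ?thesis using greenL_mult_eq eq Sw_carrier[OF ab(1)] Sw_carrier[OF ab(2)] by blast
  qed
  then show ?thesis using ab by (simp add: sclass_eq_iff schutz_rel_def)
qed

lemma \<phi>_closed: "a \<in> Sw \<Longrightarrow> \<phi> (cls a) \<in> carrier N"
  using hom sclass_carrier by (auto simp: hom_def)

lemma \<phi>_mult:
  assumes "a \<in> Sw" "b \<in> Sw" shows "\<phi> (cls (a \<otimes> b)) = \<phi> (cls a) \<otimes>\<^bsub>N\<^esub> \<phi> (cls b)"
proof -
  have "cls (a \<otimes> b) = cls a \<otimes>\<^bsub>schutz_group G (Hclass G w)\<^esub> cls b"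
    using sclass_mult[OF Hclass_carrier assms] by simp
  then show ?thesis using hom sclass_carrier[OF assms(1)] sclass_carrier[OF assms(2)] by (simp add: hom_def)
qed

lemma \<phi>_one: "\<phi> (cls \<one>) = \<one>\<^bsub>N\<^esub>"
proof -
  have "\<one> \<in> Sw" using Stab_one[OF Hclass_carrier] .
  then have "\<phi> (cls \<one>) \<otimes>\<^bsub>N\<^esub> \<phi> (cls \<one>) = \<phi> (cls \<one>)" using \<phi>_mult[of \<one> \<one>] by simp
  then show ?thesis using \<phi>_closed[OF \<open>\<one> \<in> Sw\<close>] by simp
qed

definition ker :: "('a \<times> 'a) set" where
  "ker = {(u, v). u \<in> Lw \<and> v \<in> Lw \<and> greenR G u v \<and> (\<exists>a\<in>Sw. v = u \<otimes> a \<and> \<phi> (cls a) = \<one>\<^bsub>N\<^esub>)}"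

lemma ker_coord:
  assumes u: "u \<in> Lw" and a: "a \<in> Sw"
  shows "(u, u \<otimes> a) \<in> ker \<longleftrightarrow> \<phi> (cls a) = \<one>\<^bsub>N\<^esub>"
proof
  assume "(u, u \<otimes> a) \<in> ker"
  then obtain b where b: "b \<in> Sw" "u \<otimes> a = u \<otimes> b" "\<phi> (cls b) = \<one>\<^bsub>N\<^esub>"
    by (auto simp: ker_def)
  then show "\<phi> (cls a) = \<one>\<^bsub>N\<^esub>" using Lw_cls_eq[OF u a b(1,2)] by simp
next
  assume \<phi>a: "\<phi> (cls a) = \<one>\<^bsub>N\<^esub>"
  have "a \<in> Stab G (Hclass G u)" using a Lw_Stab[OF u] by simp
  then have "u \<otimes> a \<in> Hclass G u" using Stab_image Hclass_self[OF Lw_carrier[OF u]] by blast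
  then have "greenR G u (u \<otimes> a)" "u \<otimes> a \<in> Lw" using Lw_greenL[OF u] by (simp_all add: Hclass_iff)
  then show "(u, u \<otimes> a) \<in> ker" using u a \<phi>a unfolding ker_def by blast
qed

lemma ker_elem: "(u, v) \<in> ker \<Longrightarrow> u \<in> Lw \<and> v \<in> Lw \<and> (\<exists>a\<in>Sw. v = u \<otimes> a \<and> \<phi> (cls a) = \<one>\<^bsub>N\<^esub>)"
  by (auto simp: ker_def)

lemma ker_equiv: "equiv Lw ker"
proof (rule equivI)
  show "ker \<subseteq> Lw \<times> Lw" by (auto simp: ker_def)
  show "refl_on Lw ker"
  proof (rule refl_onI)
    fix u assume u: "u \<in> Lw"
    then show "(u, u) \<in> ker"
      using ker_coord[OF u Stab_one[OF Hclass_carrier]] \<phi>_one Lw_carrier[OF u] by simp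
  qed
  show "sym ker"
  proof (rule symI)
    fix u v assume uv: "(u, v) \<in> ker"
    then obtain a where u: "u \<in> Lw" and v: "v \<in> Lw" and a: "a \<in> Sw" "v = u \<otimes> a" "\<phi> (cls a) = \<one>\<^bsub>N\<^esub>"
      using ker_elem by blast
    have "greenR G v u" using uv greenR_sym by (simp add: ker_def)
    then obtain b where b: "b \<in> Sw" "u = v \<otimes> b" using Lw_translate[OF v u] by blast
    have "u \<otimes> (a \<otimes> b) = u \<otimes> \<one>"
      using Lw_carrier[OF u] Sw_carrier[OF a(1)] Sw_carrier[OF b(1)]
      by (simp add: m_assoc[symmetric] a(2)[symmetric] b(2)[symmetric])
    then have "cls (a \<otimes> b) = cls \<one>"
      by (rule Lw_cls_eq[OF u Stab_mult[OF Hclass_carrier a(1) b(1)] Stab_one[OF Hclass_carrier]])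
    then have "\<phi> (cls b) = \<one>\<^bsub>N\<^esub>" using \<phi>_mult[OF a(1) b(1)] a(3) \<phi>_one \<phi>_closed[OF b(1)] by simp
    then show "(v, u) \<in> ker" using ker_coord[OF v b(1)] b(2) by simp
  qed
  show "trans ker"
  proof (rule transI)
    fix u v z assume "(u, v) \<in> ker" "(v, z) \<in> ker"
    then obtain a b where u: "u \<in> Lw" and a: "a \<in> Sw" "v = u \<otimes> a" "\<phi> (cls a) = \<one>\<^bsub>N\<^esub>"
      and b: "b \<in> Sw" "z = v \<otimes> b" "\<phi> (cls b) = \<one>\<^bsub>N\<^esub>"
      using ker_elem by blast
    have "z = u \<otimes> (a \<otimes> b)" using Lw_carrier[OF u] Sw_carrier a b by (simp add: m_assoc)
    moreover have "\<phi> (cls (a \<otimes> b)) = \<one>\<^bsub>N\<^esub>" using \<phi>_mult[OF a(1) b(1)] a(3) b(3) by simp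
    ultimately show "(u, z) \<in> ker"
      using ker_coord[OF u Stab_mult[OF Hclass_carrier a(1) b(1)]] by simp
  qed
qed

lemma ker_lcong: "lcong_on Lw ker"
  unfolding lcong_on_def
proof (intro ballI allI impI)
  fix m u v assume m: "m \<in> carrier G" and "(u, v) \<in> ker" and mu: "m \<otimes> u \<in> Lw" and "m \<otimes> v \<in> Lw"
  then obtain a where u: "u \<in> Lw" and a: "a \<in> Sw" "v = u \<otimes> a" "\<phi> (cls a) = \<one>\<^bsub>N\<^esub>"
    using ker_elem by blast
  have "m \<otimes> v = (m \<otimes> u) \<otimes> a" using m Lw_carrier[OF u] Sw_carrier[OF a(1)] a(2) by (simp add: m_assoc)
  then show "(m \<otimes> u, m \<otimes> v) \<in> ker" using ker_coord[OF mu a(1)] a(3) by simp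
qed

text \<open>Coordinates for the finiteness of \<open>ker\<close>: every \<open>u \<in> L\<^sub>w\<close> is \<open>b a\<close> for a fixed representative
  \<open>b\<close> of its \<open>\<R>\<close>-class and some \<open>a \<in> Stab(H\<^sub>w)\<close>.\<close>

definition Rbase :: "'a \<Rightarrow> 'a" where
  "Rbase u = (SOME h. h \<in> Lw \<and> rprinc G h = rprinc G u)"

definition coord :: "'a \<Rightarrow> 'a" where
  "coord u = (SOME a. a \<in> Sw \<and> u = Rbase u \<otimes> a)"

lemma Rbase_spec: "u \<in> Lw \<Longrightarrow> Rbase u \<in> Lw \<and> greenR G (Rbase u) u"
proof -
  assume u: "u \<in> Lw"
  have "Rbase u \<in> Lw \<and> rprinc G (Rbase u) = rprinc G u"
    unfolding Rbase_def by (rule someI[of _ u]) (use u in simp)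
  then show ?thesis using u Lw_carrier by (simp add: greenR_def)
qed

lemma coord_spec: "u \<in> Lw \<Longrightarrow> coord u \<in> Sw \<and> u = Rbase u \<otimes> coord u"
proof -
  assume u: "u \<in> Lw"
  then obtain a where "a \<in> Sw" "u = Rbase u \<otimes> a" using Lw_translate Rbase_spec by blast
  then show ?thesis unfolding coord_def by (rule someI[of _ a, OF conjI])
qed

lemma ker_label:
  assumes u: "u \<in> Lw" and v: "v \<in> Lw" and R: "rprinc G u = rprinc G v"
    and \<phi>eq: "\<phi> (cls (coord u)) = \<phi> (cls (coord v))"
  shows "(u, v) \<in> ker"
proof -
  have "greenR G u v" using u v R Lw_carrier by (simp add: greenR_def)
  then obtain c where c: "c \<in> Sw" "v = u \<otimes> c" using Lw_translate[OF u v] by blast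
  define b x y where "b = Rbase u" and "x = coord u" and "y = coord v"
  have b: "b \<in> Lw" using Rbase_spec[OF u] by (simp add: b_def)
  have x: "x \<in> Sw" "u = b \<otimes> x" using coord_spec[OF u] by (simp_all add: b_def x_def)
  have y: "y \<in> Sw" "v = b \<otimes> y" using coord_spec[OF v] R by (simp_all add: b_def y_def Rbase_def)
  have "b \<otimes> y = b \<otimes> (x \<otimes> c)"
    using Lw_carrier[OF b] Sw_carrier x(1) c(1)
    by (simp add: m_assoc[symmetric] x(2)[symmetric] y(2)[symmetric] c(2)[symmetric])
  then have "cls y = cls (x \<otimes> c)"
    by (rule Lw_cls_eq[OF b y(1) Stab_mult[OF Hclass_carrier x(1) c(1)]])
  then have "\<phi> (cls x) \<otimes>\<^bsub>N\<^esub> \<phi> (cls c) = \<phi> (cls x)"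
    using \<phi>_mult[OF x(1) c(1)] \<phi>eq by (simp add: x_def y_def)
  then have "\<phi> (cls c) = \<one>\<^bsub>N\<^esub>" using \<phi>_closed x(1) c(1) by simp
  then show ?thesis using ker_coord[OF u c(1)] c(2) by simp
qed

lemma ker_finite:
  assumes finR: "finite (right_ideals G)" and finN: "finite (carrier N)"
  shows "finite (Lw // ker)"
proof (rule finite_quotient_factor[OF ker_equiv])
  let ?F = "\<lambda>u. (rprinc G u, \<phi> (cls (coord u)))"
  have "?F ` Lw \<subseteq> right_ideals G \<times> carrier N"
    using coord_spec \<phi>_closed rprinc_right_ideal Lw_carrier by blast
  then show "finite (?F ` Lw)" using finR finN by (rule finite_subset[OF _ finite_cartesian_product])
  show "\<And>u v. u \<in> Lw \<Longrightarrow> v \<in> Lw \<Longrightarrow> ?F u = ?F v \<Longrightarrow> (u, v) \<in> ker"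
    using ker_label by simp
qed

end

lemma (in monoid) Hclass_separation:
  assumes rfg: "residually_finite_group (schutz_group G (Hclass G w))"
    and finR: "finite (right_ideals G)" and w: "w \<in> carrier G"
    and w': "w' \<in> Hclass G w" and neq: "w \<noteq> w'"
  shows "\<exists>\<kappa>. fi_lcong {v. greenL G w v} \<kappa> \<and> (w, w') \<notin> \<kappa>"
proof -
  obtain c where c: "c \<in> Stab G (Hclass G w)" "w' = w \<otimes> c" using Hclass_transitive[OF w w'] by blast
  have one: "\<one> \<in> Stab G (Hclass G w)" using Stab_one[OF Hclass_carrier] .
  have "sclass (Hclass G w) c \<noteq> sclass (Hclass G w) \<one>"
  proof
    assume "sclass (Hclass G w) c = sclass (Hclass G w) \<one>"
    then have "w \<otimes> c = w \<otimes> \<one>" using sclass_eq_iff[OF c(1) one] Hclass_self[OF w]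
      by (auto simp: schutz_rel_def)
    then show False using c(2) w neq by simp
  qed
  then obtain N :: "nat monoid" and \<phi> where N: "group N" "finite (carrier N)"
    and \<phi>: "\<phi> \<in> hom (schutz_group G (Hclass G w)) N"
    and sep: "\<phi> (sclass (Hclass G w) c) \<noteq> \<phi> (sclass (Hclass G w) \<one>)"
    using rfg sclass_carrier[OF c(1)] sclass_carrier[OF one] unfolding residually_finite_group_def
    by meson
  interpret schutz_kernel G N w \<phi>
    using \<phi> w by (intro schutz_kernel.intro[OF monoid_axioms N(1)] schutz_kernel_axioms.intro)
  have "w \<in> Lw" using w by (simp add: greenL_refl)
  then have "(w, w') \<notin> ker" using ker_coord[OF _ c(1)] c(2) sep \<phi>_one by simp
  moreover have "fi_lcong Lw ker"
    unfolding fi_lcong_def using ker_equiv ker_lcong ker_finite[OF finR N(2)] by blast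
  ultimately show ?thesis by blast
qed

context monoid
begin

section \<open>Gluing congruences along a maximal \<open>\<L>\<close>-class\<close>

definition trace :: "'a set \<Rightarrow> ('a \<times> 'a) set \<Rightarrow> 'a \<Rightarrow> 'a \<Rightarrow> 'a set option" where
  "trace A r u m = (if m \<in> carrier G \<and> m \<otimes> u \<in> A then Some (r `` {m \<otimes> u}) else None)"

lemma trace_outside: "m \<notin> carrier G \<Longrightarrow> trace A r u m = None"
  by (simp add: trace_def)

lemma trace_left_mult:
  "m \<in> carrier G \<Longrightarrow> u \<in> carrier G \<Longrightarrow> n \<in> carrier G \<Longrightarrow> trace A r (m \<otimes> u) n = trace A r u (n \<otimes> m)"
  by (simp add: trace_def m_assoc)

lemma trace_cong_left_mult:
  assumes "trace A r u = trace A r v" "m \<in> carrier G" "u \<in> carrier G" "v \<in> carrier G"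
  shows "trace A r (m \<otimes> u) = trace A r (m \<otimes> v)"
proof
  fix n show "trace A r (m \<otimes> u) n = trace A r (m \<otimes> v) n"
    using assms by (cases "n \<in> carrier G") (simp_all add: trace_left_mult trace_outside)
qed

lemma trace_Some_iff:
  assumes "equiv A r" "m \<in> carrier G" "m \<otimes> u \<in> A"
  shows "trace A r u m = trace A r v m \<longleftrightarrow> m \<otimes> v \<in> A \<and> (m \<otimes> u, m \<otimes> v) \<in> r"
  using assms eq_equiv_class_iff[OF assms(1)] by (auto simp: trace_def)

text \<open>Traces agreeing at \<open>d\<close> agree on the \<open>\<L>\<close>-class of \<open>d\<close>; hence, with finitely many
  \<open>\<L>\<close>-classes, traces have finitely many values.\<close>

lemma trace_greenL:
  assumes A: "A \<in> left_ideals G" and r: "equiv A r" "lcong_on A r"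
    and md: "greenL G m d" and uv: "u \<in> carrier G" "v \<in> carrier G"
    and eq: "trace A r u d = trace A r v d"
  shows "trace A r u m = trace A r v m"
proof -
  have c: "m \<in> carrier G" "d \<in> carrier G" using md greenL_carrier by auto
  obtain n n' where n: "n \<in> carrier G" "m = n \<otimes> d" and n': "n' \<in> carrier G" "d = n' \<otimes> m"
    using greenL_iff[OF c] md by blast
  have mem: "m \<otimes> x \<in> A \<longleftrightarrow> d \<otimes> x \<in> A" if x: "x \<in> carrier G" for x
  proof -
    have mx: "m \<otimes> x = n \<otimes> (d \<otimes> x)" using x c n(1) by (simp add: n(2) m_assoc)
    have dx: "d \<otimes> x = n' \<otimes> (m \<otimes> x)" using x c n'(1) by (simp add: n'(2) m_assoc)
    show ?thesis using left_idealD[OF A n(1), of "d \<otimes> x"] left_idealD[OF A n'(1), of "m \<otimes> x"]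
      unfolding mx[symmetric] dx[symmetric] by blast
  qed
  show ?thesis
  proof (cases "m \<otimes> u \<in> A")
    case True
    then have "d \<otimes> v \<in> A \<and> (d \<otimes> u, d \<otimes> v) \<in> r"
      using trace_Some_iff[OF r(1) c(2)] mem uv eq by simp
    then have "(n \<otimes> (d \<otimes> u), n \<otimes> (d \<otimes> v)) \<in> r"
      using lcong_on_left_ideal[OF A r(2) _ _ n(1)] r(1) by (auto simp: equiv_def)
    then have "(m \<otimes> u, m \<otimes> v) \<in> r" using c uv n by (simp add: m_assoc)
    then show ?thesis using trace_Some_iff[OF r(1) c(1) True] mem uv \<open>d \<otimes> v \<in> A \<and> _\<close> by simp
  next
    case False
    then have "trace A r u d = None" using mem uv by (simp add: trace_def)
    then have "m \<otimes> v \<notin> A" using eq mem uv c by (simp add: trace_def split: if_splits)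
    then show ?thesis using False by (simp add: trace_def)
  qed
qed

lemma finite_trace_image:
  assumes finL: "finite (left_ideals G)" and A: "A \<in> left_ideals G" and r: "fi_lcong A r"
    and U: "U \<subseteq> carrier G"
  shows "finite (trace A r ` U)"
proof -
  define rep where "rep P = (SOME d. d \<in> carrier G \<and> lprinc G d = P)" for P
  define D where "D = rep ` lprinc G ` carrier G"
  have "lprinc G ` carrier G \<subseteq> left_ideals G" using lprinc_left_ideal by blast
  then have "finite (lprinc G ` carrier G)" using finL by (rule finite_subset)
  then have finD: "finite D" by (simp add: D_def)
  have D: "\<exists>d\<in>D. greenL G m d" if m: "m \<in> carrier G" for m
  proof -
    have "rep (lprinc G m) \<in> carrier G \<and> lprinc G (rep (lprinc G m)) = lprinc G m"
      unfolding rep_def by (rule someI[of _ m]) (use m in simp)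
    then show ?thesis using m by (auto simp: D_def greenL_def)
  qed
  have "(\<lambda>u. restrict (trace A r u) D) ` U \<subseteq> D \<rightarrow>\<^sub>E insert None (Some ` (A // r))"
    by (auto simp: trace_def quotientI)
  moreover have "finite (D \<rightarrow>\<^sub>E insert None (Some ` (A // r)))"
    using finD r by (simp add: finite_PiE fi_lcong_def)
  ultimately have fin: "finite ((\<lambda>u. restrict (trace A r u) D) ` U)" by (rule finite_subset)
  show ?thesis
  proof (rule finite_image_factor[OF fin])
    fix u v assume uv: "u \<in> U" "v \<in> U" and eqD: "restrict (trace A r u) D = restrict (trace A r v) D"
    show "trace A r u = trace A r v"
    proof
      fix m show "trace A r u m = trace A r v m"
      proof (cases "m \<in> carrier G")
        case True
        then obtain d where "d \<in> D" "greenL G m d" using D by blast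
        moreover have "trace A r u d = trace A r v d" using eqD \<open>d \<in> D\<close> by (metis restrict_apply')
        moreover have "equiv A r" "lcong_on A r" using r by (simp_all add: fi_lcong_def)
        ultimately show ?thesis using trace_greenL[OF A] uv U by blast
      qed (simp add: trace_outside)
    qed
  qed
qed

text \<open>Given \<open>r\<close> on the left ideal \<open>I - L\<close> and \<open>k\<close> on \<open>L\<close>, keep \<open>r\<close> and refine \<open>k\<close> by traces in
  \<open>I - L\<close>, so that left multiplications leaving \<open>L\<close> stay compatible.\<close>

definition glue :: "'a set \<Rightarrow> ('a \<times> 'a) set \<Rightarrow> ('a \<times> 'a) set \<Rightarrow> ('a \<times> 'a) set" where
  "glue A r k = r \<union> {(u, v) \<in> k. trace A r u = trace A r v}"

context
  fixes I L :: "'a set" and r k :: "('a \<times> 'a) set"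
  assumes I: "I \<in> left_ideals G" and I': "I - L \<in> left_ideals G" and LI: "L \<subseteq> I"
    and r: "fi_lcong (I - L) r" and k: "fi_lcong L k"
begin

lemma glue_parts: "r \<subseteq> (I - L) \<times> (I - L)" "k \<subseteq> L \<times> L"
  using r k by (auto simp: fi_lcong_def equiv_def)

lemma glue_equiv: "equiv I (glue (I - L) r k)"
proof (rule equivI)
  have r': "equiv (I - L) r" and k': "equiv L k" using r k by (simp_all add: fi_lcong_def)
  show "glue (I - L) r k \<subseteq> I \<times> I" using glue_parts LI by (auto simp: glue_def)
  show "refl_on I (glue (I - L) r k)"
    using r' k' LI by (auto simp: glue_def refl_on_def equiv_def)
  show "sym (glue (I - L) r k)"
    using r' k' by (auto simp: glue_def sym_def equiv_def)
  show "trans (glue (I - L) r k)"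
  proof (rule transI)
    fix x y z assume xy: "(x, y) \<in> glue (I - L) r k" and yz: "(y, z) \<in> glue (I - L) r k"
    show "(x, z) \<in> glue (I - L) r k"
    proof (cases "y \<in> L")
      case True
      then have "(x, y) \<in> k" "(y, z) \<in> k" "trace (I - L) r x = trace (I - L) r z"
        using xy yz glue_parts by (auto simp: glue_def)
      moreover have "trans k" using k' by (simp add: equiv_def)
      ultimately show ?thesis by (auto simp: glue_def dest: transD)
    next
      case False
      then have "(x, y) \<in> r" "(y, z) \<in> r" using xy yz glue_parts by (auto simp: glue_def)
      moreover have "trans r" using r' by (simp add: equiv_def)
      ultimately show ?thesis by (auto simp: glue_def dest: transD)
    qed
  qed
qed

lemma glue_lcong: "lcong_on I (glue (I - L) r k)"
  unfolding lcong_on_def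
proof (intro ballI allI impI)
  fix m u v assume m: "m \<in> carrier G" and uv: "(u, v) \<in> glue (I - L) r k"
    and mu: "m \<otimes> u \<in> I" and mv: "m \<otimes> v \<in> I"
  have r': "equiv (I - L) r" "lcong_on (I - L) r" and k': "lcong_on L k"
    using r k by (simp_all add: fi_lcong_def)
  show "(m \<otimes> u, m \<otimes> v) \<in> glue (I - L) r k"
  proof (cases "(u, v) \<in> r")
    case True
    then show ?thesis using lcong_on_left_ideal[OF I' r'(2) glue_parts(1) _ m] by (simp add: glue_def)
  next
    case False
    then have k_uv: "(u, v) \<in> k" and tr: "trace (I - L) r u = trace (I - L) r v"
      using uv by (auto simp: glue_def)
    have uL: "u \<in> L" "v \<in> L" using k_uv glue_parts(2) by auto
    then have uc: "u \<in> carrier G" "v \<in> carrier G" using LI left_ideal_carrier[OF I] by auto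
    show ?thesis
    proof (cases "m \<otimes> u \<in> I - L")
      case True
      have "trace (I - L) r u m = trace (I - L) r v m" using tr by (rule fun_cong)
      then have "(m \<otimes> u, m \<otimes> v) \<in> r" using trace_Some_iff[OF r'(1) m True] by blast
      then show ?thesis by (simp add: glue_def)
    next
      case False
      have "trace (I - L) r v m = trace (I - L) r u m" using tr by simp
      also have "\<dots> = None" using False by (simp add: trace_def)
      finally have "m \<otimes> v \<notin> I - L" using m by (simp add: trace_def split: if_splits)
      then have "m \<otimes> v \<in> L" using mv by simp
      moreover have "m \<otimes> u \<in> L" using mu False by simp
      ultimately have "(m \<otimes> u, m \<otimes> v) \<in> k" using k' k_uv m by (simp add: lcong_on_def)
      moreover have "trace (I - L) r (m \<otimes> u) = trace (I - L) r (m \<otimes> v)"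
        using trace_cong_left_mult[OF tr m uc] .
      ultimately show ?thesis by (simp add: glue_def)
    qed
  qed
qed

lemma glue_finite:
  assumes finL: "finite (left_ideals G)"
  shows "finite (I // glue (I - L) r k)"
proof -
  have cls_r: "glue (I - L) r k `` {x} = r `` {x}" if "x \<in> I - L" for x
    using that glue_parts by (auto simp: glue_def)
  have cls_k: "glue (I - L) r k `` {x} = {v \<in> k `` {x}. trace (I - L) r x = trace (I - L) r v}"
    if "x \<in> L" for x
    using that glue_parts by (auto simp: glue_def)
  have "(\<lambda>x. glue (I - L) r k `` {x}) ` (I - L) = (I - L) // r"
    using cls_r by (auto simp: quotient_def)
  then have fin1: "finite ((\<lambda>x. glue (I - L) r k `` {x}) ` (I - L))"
    using r by (simp add: fi_lcong_def)
  have "L \<subseteq> carrier G" using LI left_ideal_carrier[OF I] by blast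
  then have "finite (trace (I - L) r ` L)" by (rule finite_trace_image[OF finL I' r])
  then have "finite (trace (I - L) r ` L \<times> L // k)" using k by (simp add: fi_lcong_def)
  moreover have "(\<lambda>x. (trace (I - L) r x, k `` {x})) ` L \<subseteq> trace (I - L) r ` L \<times> L // k"
    by (auto simp: quotient_def)
  ultimately have "finite ((\<lambda>x. (trace (I - L) r x, k `` {x})) ` L)" by (rule finite_subset[rotated])
  then have fin2: "finite ((\<lambda>x. glue (I - L) r k `` {x}) ` L)"
    by (rule finite_image_factor) (simp add: cls_k)
  have "I // glue (I - L) r k = (\<lambda>x. glue (I - L) r k `` {x}) ` (I - L) \<union> (\<lambda>x. glue (I - L) r k `` {x}) ` L"
    using LI by (auto simp: quotient_def)
  then show ?thesis using fin1 fin2 by simp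
qed

lemma fi_lcong_glue:
  assumes "finite (left_ideals G)"
  shows "fi_lcong I (glue (I - L) r k) \<and> glue (I - L) r k \<subseteq> r \<union> k"
  using glue_equiv glue_lcong glue_finite[OF assms] by (auto simp: fi_lcong_def glue_def)

end

lemma maximal_principal_left_ideal:
  assumes finL: "finite (left_ideals G)" and I: "I \<in> left_ideals G" "I \<noteq> {}"
  shows "\<exists>u0\<in>I. \<forall>v\<in>I. lprinc G u0 \<subseteq> lprinc G v \<longrightarrow> lprinc G v = lprinc G u0"
proof -
  have "lprinc G ` I \<subseteq> left_ideals G"
    using left_ideal_carrier[OF I(1)] by (auto intro: lprinc_left_ideal)
  then have "finite (lprinc G ` I)" using finL by (rule finite_subset)
  moreover have "lprinc G ` I \<noteq> {}" using I(2) by simp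
  ultimately obtain P where P: "P \<in> lprinc G ` I" and max: "\<forall>Q\<in>lprinc G ` I. P \<subseteq> Q \<longrightarrow> Q = P"
    by (metis finite_has_maximal)
  from P obtain u0 where "u0 \<in> I" "P = lprinc G u0" by blast
  with max show ?thesis by (intro bexI[of _ u0]) auto
qed

lemma Lclass_remove:
  assumes I: "I \<in> left_ideals G" and u0: "u0 \<in> I"
    and max: "\<forall>v\<in>I. lprinc G u0 \<subseteq> lprinc G v \<longrightarrow> lprinc G v = lprinc G u0"
  shows "{v. greenL G u0 v} \<subseteq> I" and "I - {v. greenL G u0 v} \<in> left_ideals G"
proof -
  have u0c: "u0 \<in> carrier G" using u0 left_ideal_carrier[OF I] by blast
  show "{v. greenL G u0 v} \<subseteq> I"
  proof
    fix v assume "v \<in> {v. greenL G u0 v}"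
    then obtain a where "a \<in> carrier G" "v = a \<otimes> u0" using greenL_iff[OF u0c] greenL_carrier by blast
    then show "v \<in> I" using left_idealD[OF I _ u0] by simp
  qed
  have "m \<otimes> v \<in> I - {v. greenL G u0 v}" if m: "m \<in> carrier G" and v: "v \<in> I" "\<not> greenL G u0 v" for m v
  proof -
    have vc: "v \<in> carrier G" using v left_ideal_carrier[OF I] by blast
    have "\<not> greenL G u0 (m \<otimes> v)"
    proof
      assume "greenL G u0 (m \<otimes> v)"
      then have "lprinc G u0 \<subseteq> lprinc G v" using lprinc_mult_subset[OF vc m] by (simp add: greenL_def)
      then have "lprinc G v = lprinc G u0" using max v(1) by blast
      then show False using v(2) u0c vc by (simp add: greenL_def)
    qed
    then show ?thesis using left_idealD[OF I m v(1)] by simp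
  qed
  then show "I - {v. greenL G u0 v} \<in> left_ideals G"
    using left_ideal_carrier[OF I] by (auto simp: left_ideals_def)
qed

lemma Lclass_separation:
  assumes rfg: "\<forall>x\<in>carrier G. residually_finite_group (schutz_group G (Hclass G x))"
    and finR: "finite (right_ideals G)" and u0: "u0 \<in> carrier G"
    and w: "w \<in> {v. greenL G u0 v}" and w': "w' \<in> {v. greenL G u0 v}" and neq: "w \<noteq> w'"
  shows "\<exists>k. fi_lcong {v. greenL G u0 v} k \<and> (w, w') \<notin> k"
proof (cases "greenR G w w'")
  case True
  have wu: "greenL G u0 w" using w by simp
  have L: "{v. greenL G w v} = {v. greenL G u0 v}"
    using greenL_trans[OF wu] greenL_trans[OF greenL_sym[OF wu]] by blast
  have "greenL G w w'" using w' L by blast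
  then have "w' \<in> Hclass G w" using True by (simp add: Hclass_iff)
  then show ?thesis
    using Hclass_separation[OF _ finR _ _ neq] rfg greenL_carrier[OF wu] L by auto
next
  case False
  have "{v. greenL G u0 v} \<subseteq> carrier G" using greenL_carrier by blast
  then show ?thesis using fi_lcong_greenR[OF finR] False by blast
qed

lemma left_ideal_separation:
  assumes rfg: "\<forall>x\<in>carrier G. residually_finite_group (schutz_group G (Hclass G x))"
    and finL: "finite (left_ideals G)" and finR: "finite (right_ideals G)"
  shows "I \<in> left_ideals G \<Longrightarrow> w \<in> I \<Longrightarrow> w' \<in> I \<Longrightarrow> w \<noteq> w' \<Longrightarrow>
    \<exists>\<rho>. fi_lcong I \<rho> \<and> (w, w') \<notin> \<rho>"
proof (induction "card {J \<in> left_ideals G. J \<subseteq> I}" arbitrary: I rule: less_induct)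
  case less
  obtain u0 where u0: "u0 \<in> I" and max: "\<forall>v\<in>I. lprinc G u0 \<subseteq> lprinc G v \<longrightarrow> lprinc G v = lprinc G u0"
    using maximal_principal_left_ideal[OF finL less.prems(1)] less.prems(2) by blast
  have u0c: "u0 \<in> carrier G" using u0 left_ideal_carrier[OF less.prems(1)] by blast
  define L where "L = {v. greenL G u0 v}"
  have LI: "L \<subseteq> I" and I': "I - L \<in> left_ideals G"
    using Lclass_remove[OF less.prems(1) u0 max] by (simp_all add: L_def)
  have "u0 \<in> L" using u0c by (simp add: L_def greenL_refl)
  then have "I \<notin> {J \<in> left_ideals G. J \<subseteq> I - L}" using u0 by blast
  then have "{J \<in> left_ideals G. J \<subseteq> I - L} \<subset> {J \<in> left_ideals G. J \<subseteq> I}"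
    using less.prems(1) by blast
  then have smaller: "card {J \<in> left_ideals G. J \<subseteq> I - L} < card {J \<in> left_ideals G. J \<subseteq> I}"
    using finL by (simp add: psubset_card_mono)
  obtain r where r: "fi_lcong (I - L) r" and r_sep: "w \<in> I - L \<and> w' \<in> I - L \<longrightarrow> (w, w') \<notin> r"
    using less.hyps[OF smaller I'] less.prems(4) fi_lcong_total by blast
  obtain k where k: "fi_lcong L k" and k_sep: "w \<in> L \<and> w' \<in> L \<longrightarrow> (w, w') \<notin> k"
    using Lclass_separation[OF rfg finR u0c] less.prems(4) fi_lcong_total unfolding L_def by blast
  have "fi_lcong I (glue (I - L) r k) \<and> glue (I - L) r k \<subseteq> r \<union> k"
    by (rule fi_lcong_glue[OF less.prems(1) I' LI r k finL])
  moreover have "(w, w') \<notin> r \<union> k"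
    using r_sep k_sep glue_parts[OF less.prems(1) I' LI r k] by blast
  ultimately show ?case by blast
qed

end

section \<open>Residual finiteness from the Schuetzenberger groups\<close>

definition transformation_monoid :: "'b set \<Rightarrow> ('b \<Rightarrow> 'b) monoid" where
  "transformation_monoid Q = \<lparr>carrier = Q \<rightarrow>\<^sub>E Q, mult = (\<lambda>f g. restrict (f \<circ> g) Q), one = restrict id Q\<rparr>"

lemma monoid_transformation_monoid: "monoid (transformation_monoid Q)"
  by (rule monoidI) (auto simp: transformation_monoid_def PiE_def Pi_def extensional_def fun_eq_iff)

lemma finite_transformation_monoid: "finite Q \<Longrightarrow> finite (carrier (transformation_monoid Q))"
  by (simp add: transformation_monoid_def finite_PiE)

context monoid
begin

definition left_action :: "('a \<times> 'a) set \<Rightarrow> 'a \<Rightarrow> 'a set \<Rightarrow> 'a set" where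
  "left_action \<rho> z = (\<lambda>C \<in> carrier G // \<rho>. \<rho> `` ((\<lambda>c. z \<otimes> c) ` C))"

lemma left_action_outside: "C \<notin> carrier G // \<rho> \<Longrightarrow> left_action \<rho> z C = undefined"
  by (simp add: left_action_def)

context
  fixes \<rho> :: "('a \<times> 'a) set"
  assumes \<rho>: "fi_lcong (carrier G) \<rho>"
begin

lemma left_action_class:
  assumes z: "z \<in> carrier G" and c: "c \<in> carrier G"
  shows "left_action \<rho> z (\<rho> `` {c}) = \<rho> `` {z \<otimes> c}"
proof -
  have eqv: "equiv (carrier G) \<rho>" and lc: "lcong_on (carrier G) \<rho>" using \<rho> by (simp_all add: fi_lcong_def)
  have "\<rho> `` {z \<otimes> d} = \<rho> `` {z \<otimes> c}" if "d \<in> \<rho> `` {c}" for d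
  proof -
    have "(c, d) \<in> \<rho>" using that by simp
    then have "(z \<otimes> c, z \<otimes> d) \<in> \<rho>"
      using lc z eqv by (auto simp: lcong_on_def equiv_def refl_on_def)
    from equiv_class_eq[OF eqv this] show ?thesis by (rule sym)
  qed
  moreover have "c \<in> \<rho> `` {c}" using c eqv by (auto simp: equiv_def refl_on_def)
  ultimately have "\<rho> `` ((\<lambda>d. z \<otimes> d) ` (\<rho> `` {c})) = \<rho> `` {z \<otimes> c}" by blast
  then show ?thesis using c by (simp add: left_action_def quotientI)
qed

lemma left_action_elem: "C \<in> carrier G // \<rho> \<Longrightarrow> \<exists>c\<in>carrier G. C = \<rho> `` {c}"
  by (auto simp: quotient_def)

lemma left_action_hom: "left_action \<rho> \<in> hom G (transformation_monoid (carrier G // \<rho>))"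
proof (rule homI)
  fix z assume z: "z \<in> carrier G"
  have "left_action \<rho> z \<in> carrier G // \<rho> \<rightarrow>\<^sub>E carrier G // \<rho>"
  proof (rule PiE_I)
    fix C assume "C \<in> carrier G // \<rho>"
    then obtain c where "c \<in> carrier G" "C = \<rho> `` {c}" using left_action_elem by blast
    then show "left_action \<rho> z C \<in> carrier G // \<rho>" using z by (simp add: left_action_class quotientI)
  qed (rule left_action_outside)
  then show "left_action \<rho> z \<in> carrier (transformation_monoid (carrier G // \<rho>))"
    by (simp add: transformation_monoid_def)
next
  fix a b assume a: "a \<in> carrier G" and b: "b \<in> carrier G"
  show "left_action \<rho> (a \<otimes> b) = left_action \<rho> a \<otimes>\<^bsub>transformation_monoid (carrier G // \<rho>)\<^esub> left_action \<rho> b"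
  proof
    fix C
    show "left_action \<rho> (a \<otimes> b) C =
      (left_action \<rho> a \<otimes>\<^bsub>transformation_monoid (carrier G // \<rho>)\<^esub> left_action \<rho> b) C"
    proof (cases "C \<in> carrier G // \<rho>")
      case True
      then obtain c where "c \<in> carrier G" "C = \<rho> `` {c}" using left_action_elem by blast
      then show ?thesis using a b True
        by (simp add: transformation_monoid_def left_action_class m_assoc)
    qed (simp add: transformation_monoid_def left_action_outside)
  qed
qed

lemma left_action_one: "left_action \<rho> \<one> = \<one>\<^bsub>transformation_monoid (carrier G // \<rho>)\<^esub>"
proof
  fix C show "left_action \<rho> \<one> C = \<one>\<^bsub>transformation_monoid (carrier G // \<rho>)\<^esub> C"
  proof (cases "C \<in> carrier G // \<rho>")
    case True
    then obtain c where "c \<in> carrier G" "C = \<rho> `` {c}" using left_action_elem by blast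
    then show ?thesis using True by (simp add: transformation_monoid_def left_action_class)
  qed (simp add: transformation_monoid_def left_action_outside)
qed

lemma left_action_separates:
  assumes x: "x \<in> carrier G" and y: "y \<in> carrier G" and xy: "(x, y) \<notin> \<rho>"
  shows "left_action \<rho> x \<noteq> left_action \<rho> y"
proof
  assume "left_action \<rho> x = left_action \<rho> y"
  then have "\<rho> `` {x} = \<rho> `` {y}" using left_action_class[OF _ one_closed] x y by (metis r_one)
  then show False using xy eq_equiv_class_iff[OF _ x y] \<rho> by (simp add: fi_lcong_def)
qed

end

lemma residually_finite_if_schutz_groups:
  assumes rfg: "\<forall>x\<in>carrier G. residually_finite_group (schutz_group G (Hclass G x))"
    and finL: "finite (left_ideals G)" and finR: "finite (right_ideals G)"
  shows "residually_finite_monoid G"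
  unfolding residually_finite_monoid_def
proof (intro ballI impI)
  fix x y assume x: "x \<in> carrier G" and y: "y \<in> carrier G" and "x \<noteq> y"
  have "carrier G \<in> left_ideals G" by (auto simp: left_ideals_def)
  then obtain \<rho> where \<rho>: "fi_lcong (carrier G) \<rho>" and sep: "(x, y) \<notin> \<rho>"
    using left_ideal_separation[OF rfg finL finR] x y \<open>x \<noteq> y\<close> by blast
  have "finite (carrier G // \<rho>)" using \<rho> by (simp add: fi_lcong_def)
  then show "\<exists>(N :: nat monoid) f. monoid N \<and> finite (carrier N) \<and> f \<in> mon_hom G N \<and> f x \<noteq> f y"
    using separation_by_nat_monoid[OF monoid_transformation_monoid finite_transformation_monoid
        left_action_hom[OF \<rho>] left_action_one[OF \<rho>] left_action_separates[OF \<rho> x y sep] x y]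
    by blast
qed

end

theorem mainTheorem20:
  fixes M :: "('a, 'b) monoid_scheme"
  assumes "monoid M"
    and "finite (left_ideals M)"
    and "finite (right_ideals M)"
  shows "residually_finite_monoid M \<longleftrightarrow>
           (\<forall>x\<in>carrier M. residually_finite_group (schutz_group M (Hclass M x)))"
proof -
  interpret monoid M by (rule assms(1))
  show ?thesis
    using schutz_group_residually_finite[OF _ Hclass_carrier]
      residually_finite_if_schutz_groups[OF _ assms(2,3)] by blast
qed

end
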